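(* In a scarce-reserves equilibrium, the aggregate real balance of reserves is strictly decreasing in the nominal interest rate: $\partial r/\partial i<0$, where $$r=\begin{cases}\dfrac{(\sigma_2+\sigma_3)\chi}{1+i_d\chi}L^{-1}(i_\ell)-\dfrac{\sigma_3\bar\delta\chi}{1+i_d\chi} & \text{if } L^{-1}(i_\ell)>\bar\delta,\\[2mm] \dfrac{\sigma_2\chi}{1+i_d\chi}L^{-1}(i_\ell) & \text{if } L^{-1}(i_\ell)\le\bar\delta.\end{cases}$$
   Context: Buyers meet sellers in one of three meeting types with probabilities $\sigma_1,\sigma_2,\sigma_3>0$ ($\sum\sigma_j=1$); type-3 buyers may use unsecured credit up to a limit $\bar\delta\ge0$. DM preferences $u,c$ with $u'>0,u''<0$, $c'>0,c''\ge0$, $u(0)=c(0)=0$, $q^*$ solving $u'(q^* )=c'(q^* )$; bargaining power $\theta\in(0,1]$, payment $v(q)=(1-\theta)u(q)+\theta c(q)$, liquidity premium $\lambda(q)=\theta[u'(q)-c'(q)]/[(1-\theta)u'(q)+\theta c'(q)]$ (strictly decreasing on $[0,q^* )$, $0$ at $q^*$), and $L(z)=\lambda(\min\{q^*,v^{-1}(z)\})$ with strictly decreasing inverse $L^{-1}$. Policy: nominal rate $i\ge0$, interest on reserves $i_r$, reserve requirement $\chi\in(0,1)$, $a=(1-\chi)/\chi$. Bank cost functions $\gamma,\eta$ twice differentiable, $\gamma',\gamma'',\eta',\eta''>0$ on $(0,\infty)$, $\gamma(0)=\gamma'(0)=\eta(0)=\eta'(0)=0$; entry cost $k>0$. Loan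 rate $i_\ell=(1+i)/(1+i_d)-1$. In a scarce-reserves equilibrium, bank-level reserves $\tilde r$ and deposit rate $i_d>0$ solve $\gamma'(\tilde r)\tilde r-\gamma(\tilde r)+\eta'(a\tilde r)a\tilde r-\eta(a\tilde r)=k$ and $i_d=i_r-\gamma'(\tilde r)+\big[\frac{1+i}{1+i_d}-1-\eta'(a\tilde r)\big]a$, each bank lends $a\tilde r$, and aggregate reserves $r$ are given by the displayed formula. *)

theory Defs
  imports "HOL-Analysis.Analysis"
begin

definition pay :: "real \<Rightarrow> (real \<Rightarrow> real) \<Rightarrow> (real \<Rightarrow> real) \<Rightarrow> real \<Rightarrow> real" where
  "pay \<theta> u c q = (1 - \<theta>) * u q + \<theta> * c q"

definition liqprem :: "real \<Rightarrow> (real \<Rightarrow> real) \<Rightarrow> (real \<Rightarrow> real) \<Rightarrow> real \<Rightarrow> real" where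
  "liqprem \<theta> u' c' q = \<theta> * (u' q - c' q) / ((1 - \<theta>) * u' q + \<theta> * c' q)"

text \<open>L(z) = lambda(min(q*, v^{-1}(z))). Since v is strictly increasing with v(0)=0,
  min(q*, v^{-1}(z)) is q* when z >= v(q*), and otherwise the unique q in [0,q*] with v(q)=z.\<close>
definition Lfun :: "real \<Rightarrow> (real \<Rightarrow> real) \<Rightarrow> (real \<Rightarrow> real) \<Rightarrow> (real \<Rightarrow> real) \<Rightarrow> (real \<Rightarrow> real)
                    \<Rightarrow> real \<Rightarrow> real \<Rightarrow> real" where
  "Lfun \<theta> u c u' c' qstar z =
     liqprem \<theta> u' c'
       (if pay \<theta> u c qstar \<le> z then qstar
        else (THE q. 0 \<le> q \<and> q \<le> qstar \<and> pay \<theta> u c q = z))"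

definition loan_rate :: "real \<Rightarrow> real \<Rightarrow> real" where
  "loan_rate i idr = (1 + i) / (1 + idr) - 1"

text \<open>Scarce-reserves equilibrium conditions: bank-level reserves rt and deposit rate idr > 0
  solve the free-entry condition and the deposit-rate condition, with a = (1-chi)/chi.\<close>
definition scarce_eq ::
  "(real \<Rightarrow> real) \<Rightarrow> (real \<Rightarrow> real) \<Rightarrow> (real \<Rightarrow> real) \<Rightarrow> (real \<Rightarrow> real)
   \<Rightarrow> real \<Rightarrow> real \<Rightarrow> real \<Rightarrow> real \<Rightarrow> real \<Rightarrow> real \<Rightarrow> bool" where
  "scarce_eq \<gamma> \<gamma>' \<eta> \<eta>' k chi ir i idr rt \<longleftrightarrow>
     (let a = (1 - chi) / chi in
        0 \<le> rt \<and> 0 < idr \<and>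
        \<gamma>' rt * rt - \<gamma> rt + \<eta>' (a * rt) * (a * rt) - \<eta> (a * rt) = k \<and>
        idr = ir - \<gamma>' rt + ((1 + i) / (1 + idr) - 1 - \<eta>' (a * rt)) * a)"

text \<open>Aggregate real reserves as a function of the deposit rate and x = L^{-1}(i_l).\<close>
definition agg_reserves :: "real \<Rightarrow> real \<Rightarrow> real \<Rightarrow> real \<Rightarrow> real \<Rightarrow> real \<Rightarrow> real" where
  "agg_reserves \<sigma>2 \<sigma>3 \<delta> chi idr x =
     (if x > \<delta> then (\<sigma>2 + \<sigma>3) * chi / (1 + idr * chi) * x - \<sigma>3 * \<delta> * chi / (1 + idr * chi)
      else \<sigma>2 * chi / (1 + idr * chi) * x)"

end

theory Submission
  imports Defs
begin

text \<open>The free-entry condition does not involve the nominal rate, and its left-hand side is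
  strictly increasing in bank reserves, so equilibrium reserves are the same for every rate.
  The deposit-rate condition then reads \<open>i\<^sub>d = C + a (1 + i) / (1 + i\<^sub>d)\<close> with \<open>C\<close>
  independent of \<open>i\<close>, whence \<open>i\<^sub>d\<close> and the loan rate \<open>(i\<^sub>d - C) / a - 1\<close> strictly rise
  with \<open>i\<close>. Since \<open>L\<^sup>-\<^sup>1\<close> is strictly decreasing, money demand \<open>L\<^sup>-\<^sup>1(i\<^sub>\<ell>)\<close> falls, and aggregate
  reserves, a positive factor \<open>\<chi> / (1 + i\<^sub>d \<chi>)\<close> decreasing in \<open>i\<^sub>d\<close> times a nonnegative
  increasing function of money demand, fall strictly.\<close>

lemma has_real_derivative_at_if_within_nonneg:
  assumes "x > 0" and "(f has_real_derivative D) (at x within {0..})"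
  shows "(f has_real_derivative D) (at x)"
  by (metis assms at_within_open greaterThan_iff has_field_derivative_subset open_greaterThan
      atLeast_iff less_imp_le subsetI)

lemma continuous_on_nonneg_if_has_derivative:
  assumes "\<And>x. x \<ge> 0 \<Longrightarrow> (f has_real_derivative f' x) (at x within {0..})"
  shows "continuous_on {0..} f"
  by (metis assms atLeast_iff continuous_on_eq_continuous_within DERIV_continuous)

lemma convex_profit_strict_mono_on:
  fixes g g' g'' :: "real \<Rightarrow> real"
  assumes g: "\<And>x. x \<ge> 0 \<Longrightarrow> (g has_real_derivative g' x) (at x within {0..})"
    and g': "\<And>x. x \<ge> 0 \<Longrightarrow> (g' has_real_derivative g'' x) (at x within {0..})"
    and g''_pos: "\<And>x. x > 0 \<Longrightarrow> g'' x > 0"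
  shows "strict_mono_on {0..} (\<lambda>x. g' x * x - g x)"
proof (rule strict_mono_onI)
  fix r s :: real assume "r \<in> {0..}" "s \<in> {0..}" "r < s"
  then have r: "0 \<le> r" "r < s" by auto
  have "{r..s} \<subseteq> {0..}" using r by auto
  then have cont: "continuous_on {r..s} (\<lambda>x. g' x * x - g x)"
    using continuous_on_nonneg_if_has_derivative[OF g] continuous_on_nonneg_if_has_derivative[OF g']
    by (intro continuous_intros) (auto intro: continuous_on_subset)
  show "g' r * r - g r < g' s * s - g s"
  proof (rule DERIV_pos_imp_increasing_open[OF r(2) _ cont])
    fix x assume "r < x" "x < s"
    then have x: "x > 0" using r by auto
    have "((\<lambda>x. g' x * x - g x) has_real_derivative g'' x * x + 1 * g' x - g' x) (at x)"
      using x by (intro DERIV_diff DERIV_mult DERIV_ident has_real_derivative_at_if_within_nonneg g g') auto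
    moreover have "g'' x * x + 1 * g' x - g' x > 0" using g''_pos[OF x] x by simp
    ultimately show "\<exists>y. ((\<lambda>x. g' x * x - g x) has_real_derivative y) (at x) \<and> 0 < y" by blast
  qed
qed

lemma free_entry_reserves_unique:
  fixes \<gamma> \<gamma>' \<gamma>'' \<eta> \<eta>' \<eta>'' :: "real \<Rightarrow> real"
  assumes a: "a > 0"
    and \<gamma>: "\<And>x. x \<ge> 0 \<Longrightarrow> (\<gamma> has_real_derivative \<gamma>' x) (at x within {0..})"
    and \<gamma>': "\<And>x. x \<ge> 0 \<Longrightarrow> (\<gamma>' has_real_derivative \<gamma>'' x) (at x within {0..})"
    and \<eta>: "\<And>x. x \<ge> 0 \<Longrightarrow> (\<eta> has_real_derivative \<eta>' x) (at x within {0..})"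
    and \<eta>': "\<And>x. x \<ge> 0 \<Longrightarrow> (\<eta>' has_real_derivative \<eta>'' x) (at x within {0..})"
    and \<gamma>''_pos: "\<And>x. x > 0 \<Longrightarrow> \<gamma>'' x > 0"
    and \<eta>''_pos: "\<And>x. x > 0 \<Longrightarrow> \<eta>'' x > 0"
    and r: "0 \<le> r" "0 \<le> s"
    and same: "\<gamma>' r * r - \<gamma> r + \<eta>' (a * r) * (a * r) - \<eta> (a * r)
             = \<gamma>' s * s - \<gamma> s + \<eta>' (a * s) * (a * s) - \<eta> (a * s)"
  shows "r = s"
proof -
  have "strict_mono_on {0..} (\<lambda>x. \<gamma>' x * x - \<gamma> x + (\<eta>' (a * x) * (a * x) - \<eta> (a * x)))"
  proof (rule strict_mono_onI)
    fix x y :: real assume "x \<in> {0..}" "y \<in> {0..}" "x < y"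
    then show "\<gamma>' x * x - \<gamma> x + (\<eta>' (a * x) * (a * x) - \<eta> (a * x))
             < \<gamma>' y * y - \<gamma> y + (\<eta>' (a * y) * (a * y) - \<eta> (a * y))"
      using convex_profit_strict_mono_on[OF \<gamma> \<gamma>' \<gamma>''_pos] convex_profit_strict_mono_on[OF \<eta> \<eta>' \<eta>''_pos] a
      by (intro add_strict_mono) (auto simp: strict_mono_on_def)
  qed
  then have "inj_on (\<lambda>x. \<gamma>' x * x - \<gamma> x + (\<eta>' (a * x) * (a * x) - \<eta> (a * x))) {0..}"
    by (rule strict_mono_on_imp_inj_on)
  then show ?thesis using r same by (auto simp: inj_on_def algebra_simps)
qed

lemma deposit_rate_strict_mono:
  fixes C a i1 i2 d1 d2 :: real
  assumes "a > 0" "0 \<le> i1" "i1 < i2" "0 < d1" "0 < d2"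
    and d1: "d1 = C + a * ((1 + i1) / (1 + d1))"
    and d2: "d2 = C + a * ((1 + i2) / (1 + d2))"
  shows "d1 < d2"
proof (rule ccontr)
  assume "\<not> d1 < d2"
  then have le: "d2 \<le> d1" by simp
  have "(1 + i1) / (1 + d1) < (1 + i2) / (1 + d1)"
    using assms by (intro divide_strict_right_mono) auto
  also have "\<dots> \<le> (1 + i2) / (1 + d2)"
    using le assms by (intro divide_left_mono) auto
  finally have "a * ((1 + i1) / (1 + d1)) < a * ((1 + i2) / (1 + d2))"
    using \<open>a > 0\<close> by (rule mult_strict_left_mono)
  then show False using d1 d2 le by linarith
qed

lemma loan_rate_eq:
  assumes "a > 0" and "d = C + a * ((1 + i) / (1 + d))"
  shows "loan_rate i d = (d - C) / a - 1"
  using assms unfolding loan_rate_def by (simp add: field_simps)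

definition reserve_demand :: "real \<Rightarrow> real \<Rightarrow> real \<Rightarrow> real \<Rightarrow> real" where
  "reserve_demand \<sigma>2 \<sigma>3 \<delta> x = (if x > \<delta> then (\<sigma>2 + \<sigma>3) * x - \<sigma>3 * \<delta> else \<sigma>2 * x)"

lemma agg_reserves_eq:
  "agg_reserves \<sigma>2 \<sigma>3 \<delta> chi d x = chi / (1 + d * chi) * reserve_demand \<sigma>2 \<sigma>3 \<delta> x"
  unfolding agg_reserves_def reserve_demand_def
  by (simp add: right_diff_distrib diff_divide_distrib mult.commute mult.left_commute)

lemma reserve_demand_nonneg:
  assumes "\<sigma>2 > 0" "\<sigma>3 > 0" "x \<ge> 0"
  shows "reserve_demand \<sigma>2 \<sigma>3 \<delta> x \<ge> 0"
proof (cases "x > \<delta>")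
  case True
  moreover have "\<sigma>3 * \<delta> \<le> \<sigma>3 * x" "0 \<le> \<sigma>2 * x" using True assms by (auto intro: mult_left_mono)
  ultimately show ?thesis unfolding reserve_demand_def by (simp add: algebra_simps)
qed (use assms in \<open>simp add: reserve_demand_def\<close>)

lemma reserve_demand_strict_mono:
  assumes "\<sigma>2 > 0" "\<sigma>3 > 0" "x < y"
  shows "reserve_demand \<sigma>2 \<sigma>3 \<delta> x < reserve_demand \<sigma>2 \<sigma>3 \<delta> y"
proof -
  have "\<sigma>2 * x < \<sigma>2 * y" "\<sigma>3 * x < \<sigma>3 * y" using assms by simp_all
  moreover have "\<sigma>3 * \<delta> \<le> \<sigma>3 * y" if "\<delta> < y" using that assms by (intro mult_left_mono) auto
  moreover have "\<sigma>3 * x \<le> \<sigma>3 * \<delta>" if "\<not> \<delta> < x" using that assms by (intro mult_left_mono) auto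
  ultimately show ?thesis using \<open>x < y\<close> unfolding reserve_demand_def by (auto simp: algebra_simps)
qed

lemma agg_reserves_strict_antimono:
  assumes "\<sigma>2 > 0" "\<sigma>3 > 0" "chi > 0" "0 < d1" "d1 \<le> d2" "0 \<le> x2" "x2 < x1"
  shows "agg_reserves \<sigma>2 \<sigma>3 \<delta> chi d2 x2 < agg_reserves \<sigma>2 \<sigma>3 \<delta> chi d1 x1"
proof -
  have "chi / (1 + d2 * chi) \<le> chi / (1 + d1 * chi)"
    using assms by (intro divide_left_mono mult_pos_pos add_pos_pos) (auto intro: mult_right_mono)
  then have "chi / (1 + d2 * chi) * reserve_demand \<sigma>2 \<sigma>3 \<delta> x2
           \<le> chi / (1 + d1 * chi) * reserve_demand \<sigma>2 \<sigma>3 \<delta> x2"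
    using reserve_demand_nonneg assms by (intro mult_right_mono) auto
  also have "\<dots> < chi / (1 + d1 * chi) * reserve_demand \<sigma>2 \<sigma>3 \<delta> x1"
    using reserve_demand_strict_mono assms by (intro mult_strict_left_mono) (auto simp: add_pos_pos)
  finally show ?thesis by (simp add: agg_reserves_eq)
qed

theorem mainTheorem9:
  fixes \<sigma>1 \<sigma>2 \<sigma>3 \<delta> \<theta> qstar ir chi k :: real
    and u c u' c' u'' c'' \<gamma> \<gamma>' \<gamma>'' \<eta> \<eta>' \<eta>'' Linv :: "real \<Rightarrow> real"
  assumes sig: "\<sigma>1 > 0" "\<sigma>2 > 0" "\<sigma>3 > 0" "\<sigma>1 + \<sigma>2 + \<sigma>3 = 1"
    and delta: "\<delta> \<ge> 0"
    and theta: "0 < \<theta>" "\<theta> \<le> 1"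
    and u_deriv: "\<And>q. q \<ge> 0 \<Longrightarrow> (u has_real_derivative u' q) (at q within {0..})"
    and u'_deriv: "\<And>q. q \<ge> 0 \<Longrightarrow> (u' has_real_derivative u'' q) (at q within {0..})"
    and c_deriv: "\<And>q. q \<ge> 0 \<Longrightarrow> (c has_real_derivative c' q) (at q within {0..})"
    and c'_deriv: "\<And>q. q \<ge> 0 \<Longrightarrow> (c' has_real_derivative c'' q) (at q within {0..})"
    and u_pos: "\<And>q. q \<ge> 0 \<Longrightarrow> u' q > 0" "\<And>q. q \<ge> 0 \<Longrightarrow> u'' q < 0"
    and c_pos: "\<And>q. q \<ge> 0 \<Longrightarrow> c' q > 0" "\<And>q. q \<ge> 0 \<Longrightarrow> c'' q \<ge> 0"
    and uc0: "u 0 = 0" "c 0 = 0"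
    and qstar: "qstar > 0" "u' qstar = c' qstar"
    and lam_dec: "strict_antimono_on {0..qstar} (liqprem \<theta> u' c')"
    and Linv: "\<And>y. y \<in> Lfun \<theta> u c u' c' qstar ` {0..} \<Longrightarrow>
                 Linv y \<ge> 0 \<and> Lfun \<theta> u c u' c' qstar (Linv y) = y"
    and Linv_dec: "strict_antimono_on (Lfun \<theta> u c u' c' qstar ` {0..}) Linv"
    and chi: "0 < chi" "chi < 1"
    and gamma_deriv: "\<And>x. x \<ge> 0 \<Longrightarrow> (\<gamma> has_real_derivative \<gamma>' x) (at x within {0..})"
    and gamma'_deriv: "\<And>x. x \<ge> 0 \<Longrightarrow> (\<gamma>' has_real_derivative \<gamma>'' x) (at x within {0..})"
    and eta_deriv: "\<And>x. x \<ge> 0 \<Longrightarrow> (\<eta> has_real_derivative \<eta>' x) (at x within {0..})"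
    and eta'_deriv: "\<And>x. x \<ge> 0 \<Longrightarrow> (\<eta>' has_real_derivative \<eta>'' x) (at x within {0..})"
    and gamma_pos: "\<And>x. x > 0 \<Longrightarrow> \<gamma>' x > 0" "\<And>x. x > 0 \<Longrightarrow> \<gamma>'' x > 0"
    and eta_pos: "\<And>x. x > 0 \<Longrightarrow> \<eta>' x > 0" "\<And>x. x > 0 \<Longrightarrow> \<eta>'' x > 0"
    and gamma0: "\<gamma> 0 = 0" "\<gamma>' 0 = 0"
    and eta0: "\<eta> 0 = 0" "\<eta>' 0 = 0"
    and k: "k > 0"
    and rates: "0 \<le> i1" "i1 < i2"
    and eq1: "scarce_eq \<gamma> \<gamma>' \<eta> \<eta>' k chi ir i1 id1 rt1"
    and eq2: "scarce_eq \<gamma> \<gamma>' \<eta> \<eta>' k chi ir i2 id2 rt2"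
    and dom1: "loan_rate i1 id1 \<in> Lfun \<theta> u c u' c' qstar ` {0..}"
    and dom2: "loan_rate i2 id2 \<in> Lfun \<theta> u c u' c' qstar ` {0..}"
  shows "agg_reserves \<sigma>2 \<sigma>3 \<delta> chi id2 (Linv (loan_rate i2 id2))
       < agg_reserves \<sigma>2 \<sigma>3 \<delta> chi id1 (Linv (loan_rate i1 id1))"
proof -
  define a where "a = (1 - chi) / chi"
  have a: "a > 0" using chi by (simp add: a_def)
  from eq1 eq2 have e: "0 \<le> rt1" "0 < id1" "0 \<le> rt2" "0 < id2"
    "\<gamma>' rt1 * rt1 - \<gamma> rt1 + \<eta>' (a * rt1) * (a * rt1) - \<eta> (a * rt1) = k"
    "\<gamma>' rt2 * rt2 - \<gamma> rt2 + \<eta>' (a * rt2) * (a * rt2) - \<eta> (a * rt2) = k"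
    "id1 = ir - \<gamma>' rt1 + ((1 + i1) / (1 + id1) - 1 - \<eta>' (a * rt1)) * a"
    "id2 = ir - \<gamma>' rt2 + ((1 + i2) / (1 + id2) - 1 - \<eta>' (a * rt2)) * a"
    unfolding scarce_eq_def a_def Let_def by auto
  have "rt1 = rt2"
    using free_entry_reserves_unique[OF a gamma_deriv gamma'_deriv eta_deriv eta'_deriv
        gamma_pos(2) eta_pos(2)] e by simp
  define C where "C = ir - \<gamma>' rt1 - a - \<eta>' (a * rt1) * a"
  have q1: "id1 = C + a * ((1 + i1) / (1 + id1))"
    and q2: "id2 = C + a * ((1 + i2) / (1 + id2))"
    using e \<open>rt1 = rt2\<close> unfolding C_def by (simp_all add: algebra_simps)
  have "id1 < id2" using deposit_rate_strict_mono[OF a rates e(2,4) q1 q2] .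
  then have "loan_rate i1 id1 < loan_rate i2 id2"
    using a by (simp add: loan_rate_eq[OF a q1] loan_rate_eq[OF a q2] divide_strict_right_mono)
  then have "Linv (loan_rate i2 id2) < Linv (loan_rate i1 id1)"
    using Linv_dec dom1 dom2 unfolding monotone_on_def by auto
  then show ?thesis
    using agg_reserves_strict_antimono sig chi e \<open>id1 < id2\<close> Linv[OF dom2] by simp
qed

end
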